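(* Consider Setting B with the regular nodes running Algorithm 2 (any graph sequence, any adversarial behavior). Let $i\in(\mathcal V\setminus\mathcal S)\cap\mathcal R$ and $k\in\mathbb N_+$ with $\tau_i[k]\neq\omega$. Then, componentwise (slot by slot), $$\mathbf d_i[k+1]\le \mathbf d_i[k]+\mathbf 1_{2f+1},\qquad\text{and}\qquad \tau_i[k+1]\le\tau_i[k]+1,$$ where $\mathbf d_i[k]\in\mathbb N^{2f+1}$ is the vector of stored indices $d_{i,l}$, $l\in\mathcal M_i$, arranged by storage slot, at time $k$ after the append operations of step $k$ and before the increment at the end of step $k$ (so that (F) sets $\tau_i[k+1]=\max_p(\mathbf d_i[k])_p+1$).
   Context: Setting B. Scalar system $x[k+1]=ax[k]$, $a\in\mathbb R$, monitored by nodes $\mathcal V=\{1,\dots,N\}$ with measurements $y_i[k]=c_ix[k]$, $c_i\in\mathbb R$. Source set $\mathcal S=\{i\in\mathcal V:c_i\neq0\}$. Time-varying directed graphs $\mathcal G[k]=(\mathcal V,\mathcal E[k])$, $\mathcal N_i[k]=\{l\ne i:(l,i)\in\mathcal E[k]\}$; the union graph over an interval has the union of the edge sets. An unknown set $\mathcal A\subseteq\mathcal V$ of adversarial nodes with $|\mathcal A|\le f$ ($f$-total model; $\mathcal A$ may intersect $\mathcal S$); $\mathcal R=\mathcal V\setminus\mathcal A$ are regular. Adversaries are Byzantine: at each time they may send arbitrary, possibly different values (of both estimate and freshness index) to different out-neighbors, or send nothing, and may collude. At each time $k$, each node $l$ sends to its out-neighbors a pair (estimate, freshness index); regular $l$ sends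 its true $(\hat x_l[k],\tau_l[k])$. Algorithm 2 (executed by regular nodes). Regular source $i\in\mathcal S$: $\tau_i[k]=0$ for all $k$ and $\hat x_i[k+1]=a\hat x_i[k]+l_i(y_i[k]-c_i\hat x_i[k])$ with observer gain $l_i$. Regular non-source $i$: keeps $\hat x_i[k]$ (arbitrary initial), $\tau_i[k]\in\mathbb N\cup\{\omega\}$ with $\tau_i[0]=\omega$, and a list $\mathcal M_i$ of distinct node labels (initially empty, at most $2f+1$ entries, stored in $2f+1$ slots) with, for each $l\in\mathcal M_i$, a stored estimate $v_{i,l}$, stored index $d_{i,l}\in\mathbb N$ and time stamp $\phi_{i,l}$. At time $k$ let $\mathcal J_i[k]$ be the set of $l\in\mathcal N_i[k]$ whose reported index $\tau_l[k]$ lies in $\mathbb N$ and satisfies $\tau_l[k]\le k$. "Appending $l$ at time $k$" means: put $l$ in $\mathcal M_i$ (if absent), set $v_{i,l}=\hat x_l[k]$, $d_{i,l}=\tau_l[k]$ (reported values), $\phi_{i,l}=k$. Filtering update (F) at time $k$ (requires $|\mathcal M_i|=2f+1$): set $\tau_i[k+1]=\max_{l\in\mathcal M_i}d_{i,l}+1$; form $\bar x_{i,l}[k]=a^{k-\phi_{i,l}}v_{i,l}$ for $l\in\mathcal M_i$; discard the $f$ largest and $f$ smallest of these $2f+1$ values, call the remaining one $\bar x_i[k]$, and set $\hat x_i[k+1]=a\bar x_i[k]$. Case $\tau_i[k]=\omega$: let $\mathcal J'=\mathcal J_i[k]\setminus\mathcal M_i$. If $|\mathcal M_i|+|\mathcal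 J'|<2f+1$, append every $l\in\mathcal J'$, set $\tau_i[k+1]=\omega$ and $\hat x_i[k+1]=a\hat x_i[k]$. Otherwise append the $2f+1-|\mathcal M_i|$ nodes of $\mathcal J'$ with smallest reported indices (ties broken arbitrarily) and perform (F). Case $\tau_i[k]\ne\omega$: for each $l\in\mathcal J_i[k]\cap\mathcal M_i$ with reported $\tau_l[k]<d_{i,l}$, append $l$ (refreshing its entries); then rank the nodes of $\mathcal M_i\cup(\mathcal J_i[k]\setminus\mathcal M_i)$ by index ($d_{i,l}$ for $l\in\mathcal M_i$, reported $\tau_l[k]$ otherwise), keep the $2f+1$ with smallest index (ties arbitrary), appending newcomers and deleting dropped nodes (a retained node keeps its storage slot; a newcomer occupies the slot of a dropped node), and perform (F). In all cases, after the step every stored $d_{i,l}$ is incremented by $1$, and $\mathcal M_i$, $v$, $\phi$ carry over to time $k+1$. *)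

theory Defs
  imports Main "HOL.Real"
begin

text \<open>Setting B, Algorithm 2.  Freshness indices live in nat option; None plays the role of omega.
A stored entry of the list M_i is a tuple (label l, estimate v, index d, time stamp phi).
The list M_i is stored in 2f+1 slots; a slot vector is a map from slot numbers (p < 2f+1)
to optional entries (None = empty slot).\<close>

type_synonym 'n entry = "'n \<times> real \<times> nat \<times> nat"
type_synonym 'n slots = "nat \<Rightarrow> 'n entry option"
type_synonym 'n msg = "(real \<times> nat option) option"  \<comment> \<open>None = nothing sent\<close>

definition ent_l :: "'n entry \<Rightarrow> 'n" where "ent_l e = fst e"
definition ent_v :: "'n entry \<Rightarrow> real" where "ent_v e = fst (snd e)"
definition ent_d :: "'n entry \<Rightarrow> nat" where "ent_d e = fst (snd (snd e))"
definition ent_phi :: "'n entry \<Rightarrow> nat" where "ent_phi e = snd (snd (snd e))"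

definition Nin :: "(nat \<Rightarrow> ('n \<times> 'n) set) \<Rightarrow> 'n \<Rightarrow> nat \<Rightarrow> 'n set" where
  "Nin E i k = {l. l \<noteq> i \<and> (l, i) \<in> E k}"

definition rep_x :: "'n msg \<Rightarrow> real" where "rep_x r = fst (the r)"
definition rep_t :: "'n msg \<Rightarrow> nat" where "rep_t r = the (snd (the r))"

definition Jset :: "nat \<Rightarrow> 'n set \<Rightarrow> ('n \<Rightarrow> 'n msg) \<Rightarrow> 'n set" where
  "Jset k N rep = {l \<in> N. \<exists>x t. rep l = Some (x, Some t) \<and> t \<le> k}"

definition new_entry :: "nat \<Rightarrow> ('n \<Rightarrow> 'n msg) \<Rightarrow> 'n \<Rightarrow> 'n entry" where
  "new_entry k rep l = (l, rep_x (rep l), rep_t (rep l), k)"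

definition labels :: "nat \<Rightarrow> 'n slots \<Rightarrow> 'n set" where
  "labels m S = (\<lambda>p. ent_l (the (S p))) ` {p. p < m \<and> S p \<noteq> None}"

definition append_into :: "nat \<Rightarrow> ('n \<Rightarrow> 'n entry) \<Rightarrow> 'n slots \<Rightarrow> 'n set \<Rightarrow> 'n slots \<Rightarrow> bool" where
  "append_into m newe S B T \<longleftrightarrow>
     (\<exists>Q g. Q \<subseteq> {p. p < m \<and> S p = None} \<and> bij_betw g Q B \<and>
        (\<forall>p\<in>Q. T p = Some (newe (g p))) \<and>
        (\<forall>p. p < m \<and> S p \<noteq> None \<longrightarrow> T p = S p) \<and>
        (\<forall>p. p < m \<and> S p = None \<and> p \<notin> Q \<longrightarrow> T p = None) \<and>
        (\<forall>p. m \<le> p \<longrightarrow> T p = None))"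

text \<open>Median of 2f+1 values: discard the f largest and f smallest.\<close>
definition median_trim :: "nat \<Rightarrow> real list \<Rightarrow> real" where
  "median_trim f xs = sort xs ! f"

definition filt :: "nat \<Rightarrow> real \<Rightarrow> nat \<Rightarrow> 'n slots \<Rightarrow> nat option \<Rightarrow> real \<Rightarrow> bool" where
  "filt f a k T tau' xh' \<longleftrightarrow>
     (\<forall>p < 2*f+1. T p \<noteq> None) \<and>
     tau' = Some (Max ((\<lambda>p. ent_d (the (T p))) ` {..<2*f+1}) + 1) \<and>
     xh' = a * median_trim f (map (\<lambda>p. a ^ (k - ent_phi (the (T p))) * ent_v (the (T p))) [0..<2*f+1])"

definition refresh :: "nat \<Rightarrow> 'n set \<Rightarrow> ('n \<Rightarrow> 'n msg) \<Rightarrow> 'n slots \<Rightarrow> 'n slots" where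
  "refresh k J rep S = (\<lambda>p. case S p of None \<Rightarrow> None
       | Some e \<Rightarrow> if ent_l e \<in> J \<and> rep_t (rep (ent_l e)) < ent_d e
                   then Some (new_entry k rep (ent_l e)) else Some e)"

definition idx_of :: "nat \<Rightarrow> ('n \<Rightarrow> 'n msg) \<Rightarrow> 'n slots \<Rightarrow> 'n \<Rightarrow> nat" where
  "idx_of m rep S l =
     (if \<exists>p<m. S p \<noteq> None \<and> ent_l (the (S p)) = l
      then ent_d (the (S (SOME p. p < m \<and> S p \<noteq> None \<and> ent_l (the (S p)) = l)))
      else rep_t (rep l))"

definition incr :: "'n slots \<Rightarrow> 'n slots" where
  "incr T = (\<lambda>p. map_option (\<lambda>(l, v, d, ph). (l, v, d + 1, ph)) (T p))"

text \<open>One step (time k) of Algorithm 2 at a regular non-source node with in-neighbourhood N and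
received messages rep: from state (xh, tau, S) via post-append slots T to state (xh', tau', S').\<close>
definition nstep :: "nat \<Rightarrow> real \<Rightarrow> nat \<Rightarrow> 'n set \<Rightarrow> ('n \<Rightarrow> 'n msg) \<Rightarrow>
    real \<Rightarrow> nat option \<Rightarrow> 'n slots \<Rightarrow> 'n slots \<Rightarrow> real \<Rightarrow> nat option \<Rightarrow> 'n slots \<Rightarrow> bool" where
  "nstep f a k N rep xh tau S T xh' tau' S' \<longleftrightarrow>
    (let m = 2*f+1; J = Jset k N rep; newe = new_entry k rep in
     S' = incr T \<and>
     (if tau = None then
        (let L0 = labels m S; J' = J - L0 in
          (card L0 + card J' < m \<and> append_into m newe S J' T \<and> tau' = None \<and> xh' = a * xh)
        \<or> (m \<le> card L0 + card J' \<and>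
            (\<exists>B. B \<subseteq> J' \<and> card B = m - card L0 \<and>
                 (\<forall>l\<in>B. \<forall>l'\<in>J' - B. rep_t (rep l) \<le> rep_t (rep l')) \<and>
                 append_into m newe S B T) \<and>
            filt f a k T tau' xh'))
      else
        (let S1 = refresh k J rep S; L0 = labels m S1; C = L0 \<union> J;
             idx = idx_of m rep S1 in
          \<exists>K. K \<subseteq> C \<and> card K = m \<and> (\<forall>l\<in>K. \<forall>l'\<in>C - K. idx l \<le> idx l') \<and>
            (\<forall>p<m. S1 p \<noteq> None \<and> ent_l (the (S1 p)) \<in> K \<longrightarrow> T p = S1 p) \<and>
            (\<forall>p<m. S1 p = None \<longrightarrow> T p = None) \<and>
            (\<forall>p. m \<le> p \<longrightarrow> T p = None) \<and>
            (\<exists>g. bij_betw g {p. p < m \<and> S1 p \<noteq> None \<and> ent_l (the (S1 p)) \<notin> K} (K - L0) \<and>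
                 (\<forall>p. p < m \<and> S1 p \<noteq> None \<and> ent_l (the (S1 p)) \<notin> K \<longrightarrow>
                      T p = Some (newe (g p)))) \<and>
            filt f a k T tau' xh')))"

text \<open>A run of the whole network (Setting B, Algorithm 2).  xs: system state; xh, tau: estimate and
freshness index of each node; sl i k: slots of node i at the start of step k; mid i k: slots of
node i at step k after the append operations and before the increment.  msg k l j: what node l
sends to j at time k.\<close>
definition alg2_run ::
  "real \<Rightarrow> ('n \<Rightarrow> real) \<Rightarrow> ('n \<Rightarrow> real) \<Rightarrow> nat \<Rightarrow> (nat \<Rightarrow> ('n \<times> 'n) set) \<Rightarrow> 'n set \<Rightarrow>
   (nat \<Rightarrow> 'n \<Rightarrow> 'n \<Rightarrow> 'n msg) \<Rightarrow> (nat \<Rightarrow> real) \<Rightarrow> ('n \<Rightarrow> nat \<Rightarrow> real) \<Rightarrow>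
   ('n \<Rightarrow> nat \<Rightarrow> nat option) \<Rightarrow> ('n \<Rightarrow> nat \<Rightarrow> 'n slots) \<Rightarrow> ('n \<Rightarrow> nat \<Rightarrow> 'n slots) \<Rightarrow> bool" where
  "alg2_run a c L f E A msg xs xh tau sl mid \<longleftrightarrow>
     (\<forall>k. xs (Suc k) = a * xs k) \<and>
     (\<forall>l k j. l \<notin> A \<longrightarrow> msg k l j = Some (xh l k, tau l k)) \<and>
     (\<forall>i. i \<notin> A \<and> c i \<noteq> 0 \<longrightarrow>
        (\<forall>k. tau i k = Some 0 \<and>
             xh i (Suc k) = a * xh i k + L i * (c i * xs k - c i * xh i k))) \<and>
     (\<forall>i. i \<notin> A \<and> c i = 0 \<longrightarrow>
        tau i 0 = None \<and> sl i 0 = (\<lambda>p. None) \<and>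
        (\<forall>k. nstep f a k (Nin E i k) (\<lambda>l. msg k l i) (xh i k) (tau i k) (sl i k) (mid i k)
                   (xh i (Suc k)) (tau i (Suc k)) (sl i (Suc k))))"

definition dvec :: "'n slots \<Rightarrow> nat \<Rightarrow> nat" where
  "dvec T p = (case T p of None \<Rightarrow> 0 | Some e \<Rightarrow> ent_d e)"

end

theory Submission
  imports Defs
begin

text \<open>In the non-omega case a node only ever swaps the entry of a storage slot
for one whose index is no larger: a refreshed entry carries a smaller reported index, and a
newcomer replaces a dropped node only because it ranks no worse.  This needs the labels in the
slots to be pairwise distinct (so that the ranking index of a stored node is the index in its own
slot), which every step preserves.  Hence, slot by slot, the index after the appends of step
k+1 is at most the index after the appends of step k plus the increment in between, and since
tau[k+1] is the maximum of these indices plus one, the bound on tau follows.\<close>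

lemma Max_image_le_Max_image_add:
  fixes g h :: "'a \<Rightarrow> 'b::linordered_ab_semigroup_add"
  assumes "finite X" "X \<noteq> {}" "\<And>x. x \<in> X \<Longrightarrow> g x \<le> h x + c"
  shows "Max (g ` X) \<le> Max (h ` X) + c"
proof -
  have "g x \<le> Max (h ` X) + c" if "x \<in> X" for x
  proof -
    have "h x \<le> Max (h ` X)" using assms(1) that by simp
    then show ?thesis using assms(3)[OF that] by (meson add_right_mono order_trans)
  qed
  then show ?thesis using assms(1,2) by simp
qed

definition distinct_labels :: "nat \<Rightarrow> 'n slots \<Rightarrow> bool" where
  "distinct_labels m S \<longleftrightarrow> (\<forall>p<m. \<forall>q<m. S p \<noteq> None \<longrightarrow> S q \<noteq> None \<longrightarrow>
      ent_l (the (S p)) = ent_l (the (S q)) \<longrightarrow> p = q)"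

lemma distinct_labelsD:
  "distinct_labels m S \<Longrightarrow> p < m \<Longrightarrow> q < m \<Longrightarrow> S p \<noteq> None \<Longrightarrow> S q \<noteq> None \<Longrightarrow>
    ent_l (the (S p)) = ent_l (the (S q)) \<Longrightarrow> p = q"
  unfolding distinct_labels_def by blast

lemma ent_l_new_entry [simp]: "ent_l (new_entry k rep l) = l"
  by (simp add: new_entry_def ent_l_def)

lemma ent_d_new_entry [simp]: "ent_d (new_entry k rep l) = rep_t (rep l)"
  by (simp add: new_entry_def ent_d_def)

lemma refresh_eq_None_iff [simp]: "refresh k J rep S p = None \<longleftrightarrow> S p = None"
  by (cases "S p") (auto simp: refresh_def new_entry_def)

lemma ent_l_refresh: "S p \<noteq> None \<Longrightarrow> ent_l (the (refresh k J rep S p)) = ent_l (the (S p))"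
  by (cases "S p") (auto simp: refresh_def)

lemma ent_d_refresh_le: "S p \<noteq> None \<Longrightarrow> ent_d (the (refresh k J rep S p)) \<le> ent_d (the (S p))"
  by (cases "S p") (auto simp: refresh_def)

lemma incr_eq_None_iff [simp]: "incr T p = None \<longleftrightarrow> T p = None"
  by (simp add: incr_def)

lemma ent_l_incr: "T p \<noteq> None \<Longrightarrow> ent_l (the (incr T p)) = ent_l (the (T p))"
  by (auto simp: incr_def ent_l_def)

lemma dvec_incr: "T p \<noteq> None \<Longrightarrow> dvec (incr T) p = dvec T p + 1"
  by (auto simp: dvec_def incr_def ent_d_def)

lemma dvec_eq: "T p \<noteq> None \<Longrightarrow> dvec T p = ent_d (the (T p))"
  by (auto simp: dvec_def)

lemma labels_iff: "l \<in> labels m S \<longleftrightarrow> (\<exists>p<m. S p \<noteq> None \<and> ent_l (the (S p)) = l)"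
  by (auto simp: labels_def)

lemma idx_of_stored:
  assumes "distinct_labels m S" "p < m" "S p \<noteq> None"
  shows "idx_of m rep S (ent_l (the (S p))) = ent_d (the (S p))"
proof -
  let ?P = "\<lambda>q. q < m \<and> S q \<noteq> None \<and> ent_l (the (S q)) = ent_l (the (S p))"
  have "?P p" using assms(2,3) by simp
  moreover have "(SOME q. ?P q) = p"
    using someI[of ?P, OF \<open>?P p\<close>] distinct_labelsD[OF assms(1)] assms(2,3) by blast
  ultimately show ?thesis unfolding idx_of_def by (metis (no_types, lifting))
qed

lemma idx_of_not_stored: "l \<notin> labels m S \<Longrightarrow> idx_of m rep S l = rep_t (rep l)"
  unfolding idx_of_def labels_iff by (rule if_not_P)

lemma distinct_labels_incr: "distinct_labels m T \<Longrightarrow> distinct_labels m (incr T)"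
  unfolding distinct_labels_def by (metis incr_eq_None_iff ent_l_incr)

lemma distinct_labels_refresh: "distinct_labels m S \<Longrightarrow> distinct_labels m (refresh k J rep S)"
  unfolding distinct_labels_def by (metis refresh_eq_None_iff ent_l_refresh)

text \<open>Both kinds of appends keep some old slots and fill the others with fresh labels.\<close>

lemma distinct_labels_update:
  assumes "distinct_labels m S" "inj_on g Q" "g ` Q \<inter> labels m S = {}"
    and "\<And>p. p < m \<Longrightarrow> T p \<noteq> None \<Longrightarrow> T p = S p \<or> (p \<in> Q \<and> ent_l (the (T p)) = g p)"
  shows "distinct_labels m T"
  unfolding distinct_labels_def
proof (intro allI impI)
  fix p q assume pq: "p < m" "q < m" "T p \<noteq> None" "T q \<noteq> None"
    and same: "ent_l (the (T p)) = ent_l (the (T q))"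
  have fresh: "ent_l (the (S r)) \<noteq> g s" if "r < m" "S r \<noteq> None" "s \<in> Q" for r s
  proof -
    have "ent_l (the (S r)) \<in> labels m S" unfolding labels_iff using that(1,2) by blast
    then show ?thesis using assms(3) that(3) by blast
  qed
  from assms(4)[OF pq(2,4)] assms(4)[OF pq(1,3)] show "p = q"
  proof (elim disjE conjE)
    assume "T q = S q" "T p = S p"
    then show ?thesis using distinct_labelsD[OF assms(1) pq(1,2)] pq(3,4) same by simp
  next
    assume "q \<in> Q" "ent_l (the (T q)) = g q" "T p = S p"
    then show ?thesis using fresh[OF pq(1), of q] pq(3) same by simp
  next
    assume "T q = S q" "p \<in> Q" "ent_l (the (T p)) = g p"
    then show ?thesis using fresh[OF pq(2), of p] pq(4) same by simp
  next
    assume "q \<in> Q" "ent_l (the (T q)) = g q" "p \<in> Q" "ent_l (the (T p)) = g p"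
    then show ?thesis using assms(2) same by (simp add: inj_on_eq_iff)
  qed
qed

lemma distinct_labels_append_into:
  assumes "append_into m (new_entry k rep) S B T" "distinct_labels m S" "B \<inter> labels m S = {}"
  shows "distinct_labels m T"
proof -
  obtain Q g where Q: "Q \<subseteq> {p. p < m \<and> S p = None}" "bij_betw g Q B"
    "\<forall>p\<in>Q. T p = Some (new_entry k rep (g p))"
    "\<forall>p. p < m \<and> S p \<noteq> None \<longrightarrow> T p = S p"
    "\<forall>p. p < m \<and> S p = None \<and> p \<notin> Q \<longrightarrow> T p = None"
    using assms(1) unfolding append_into_def by blast
  show ?thesis
  proof (rule distinct_labels_update[OF assms(2)])
    show "inj_on g Q" "g ` Q \<inter> labels m S = {}"
      using Q(2) assms(3) by (auto simp: bij_betw_def)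
    show "T p = S p \<or> (p \<in> Q \<and> ent_l (the (T p)) = g p)" if "p < m" "T p \<noteq> None" for p
    proof (cases "p \<in> Q")
      case True
      then show ?thesis using Q(3) by simp
    next
      case False
      then show ?thesis using Q(4,5) that by metis
    qed
  qed
qed

lemma nstep_incr: "nstep f a k N rep xh tau S T xh' tau' S' \<Longrightarrow> S' = incr T"
  unfolding nstep_def Let_def by (rule conjunct1)

lemma nstep_omega_appends:
  assumes "nstep f a k N rep xh tau S T xh' tau' S'" "tau = None"
  obtains B where "B \<subseteq> Jset k N rep - labels (2*f+1) S"
    "append_into (2*f+1) (new_entry k rep) S B T"
  using assms that unfolding nstep_def Let_def by (auto simp del: Diff_iff)

lemma nstep_nonomegaE:
  assumes "nstep f a k N rep xh tau S T xh' tau' S'" "tau \<noteq> None"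
  defines "S1 \<equiv> refresh k (Jset k N rep) rep S"
  defines "L0 \<equiv> labels (2*f+1) S1"
  defines "C \<equiv> L0 \<union> Jset k N rep"
  obtains K g where "\<forall>l\<in>K. \<forall>l'\<in>C - K. idx_of (2*f+1) rep S1 l \<le> idx_of (2*f+1) rep S1 l'"
      "\<forall>p<2*f+1. S1 p \<noteq> None \<and> ent_l (the (S1 p)) \<in> K \<longrightarrow> T p = S1 p"
      "\<forall>p<2*f+1. S1 p = None \<longrightarrow> T p = None"
      "bij_betw g {p. p < 2*f+1 \<and> S1 p \<noteq> None \<and> ent_l (the (S1 p)) \<notin> K} (K - L0)"
      "\<forall>p. p < 2*f+1 \<and> S1 p \<noteq> None \<and> ent_l (the (S1 p)) \<notin> K \<longrightarrow>
                      T p = Some (new_entry k rep (g p))"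
      "filt f a k T tau' xh'"
  using assms(1,2) that unfolding nstep_def Let_def S1_def L0_def C_def by auto

lemma nstep_filt:
  assumes "nstep f a k N rep xh tau S T xh' tau' S'" "tau' \<noteq> None"
  shows "filt f a k T tau' xh'"
  using assms unfolding nstep_def Let_def by (cases "tau = None") auto

lemma nstep_keeps_index:
  assumes "nstep f a k N rep xh tau S T xh' tau' S'" "tau \<noteq> None"
  shows "tau' \<noteq> None"
  using assms unfolding nstep_def Let_def filt_def by auto

lemma distinct_labels_nstep:
  assumes "nstep f a k N rep xh tau S T xh' tau' S'" "distinct_labels (2*f+1) S"
  shows "distinct_labels (2*f+1) S'"
proof -
  let ?m = "2*f+1"
  have "distinct_labels ?m T"
  proof (cases "tau = None")
    case True
    obtain B where B: "B \<subseteq> Jset k N rep - labels ?m S"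
      "append_into ?m (new_entry k rep) S B T"
      by (rule nstep_omega_appends[OF assms(1) True])
    show ?thesis
      by (rule distinct_labels_append_into[OF B(2) assms(2)]) (use B(1) in blast)
  next
    case False
    let ?S1 = "refresh k (Jset k N rep) rep S"
    obtain K g where K: "\<forall>p<?m. ?S1 p \<noteq> None \<and> ent_l (the (?S1 p)) \<in> K \<longrightarrow> T p = ?S1 p"
      "\<forall>p<?m. ?S1 p = None \<longrightarrow> T p = None"
      "bij_betw g {p. p < ?m \<and> ?S1 p \<noteq> None \<and> ent_l (the (?S1 p)) \<notin> K} (K - labels ?m ?S1)"
      "\<forall>p. p < ?m \<and> ?S1 p \<noteq> None \<and> ent_l (the (?S1 p)) \<notin> K \<longrightarrow>
                      T p = Some (new_entry k rep (g p))"
      by (rule nstep_nonomegaE[OF assms(1) False])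
    let ?Q = "{p. p < ?m \<and> ?S1 p \<noteq> None \<and> ent_l (the (?S1 p)) \<notin> K}"
    show ?thesis
    proof (rule distinct_labels_update[OF distinct_labels_refresh[OF assms(2)]])
      show "inj_on g ?Q" using bij_betw_imp_inj_on[OF K(3)] .
      show "g ` ?Q \<inter> labels ?m ?S1 = {}" using bij_betw_imp_surj_on[OF K(3)] by blast
      show "T p = ?S1 p \<or> (p \<in> ?Q \<and> ent_l (the (T p)) = g p)" if "p < ?m" "T p \<noteq> None" for p
      proof -
        have S1p: "?S1 p \<noteq> None"
        proof
          assume "?S1 p = None"
          then have "T p = None" using K(2) that(1) by blast
          with that(2) show False by simp
        qed
        show ?thesis
        proof (cases "ent_l (the (?S1 p)) \<in> K")
          case True
          then show ?thesis using K(1) that(1) S1p by blast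
        next
          case False
          then have "p \<in> ?Q" using that(1) S1p by blast
          moreover have "T p = Some (new_entry k rep (g p))" using K(4) that(1) S1p False by blast
          ultimately show ?thesis by simp
        qed
      qed
    qed
  qed
  then show ?thesis unfolding nstep_incr[OF assms(1)] by (rule distinct_labels_incr)
qed

lemma nstep_nonomega_dvec_le:
  assumes "nstep f a k N rep xh tau S T xh' tau' S'" "tau \<noteq> None"
    and "distinct_labels (2*f+1) S" "\<forall>q<2*f+1. S q \<noteq> None" "p < 2*f+1"
  shows "T p \<noteq> None \<and> dvec T p \<le> dvec S p"
proof -
  let ?m = "2*f+1"
  let ?S1 = "refresh k (Jset k N rep) rep S"
  let ?L0 = "labels ?m ?S1"
  let ?idx = "idx_of ?m rep ?S1"
  let ?l = "ent_l (the (?S1 p))"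
  obtain K g where K: "\<forall>l\<in>K. \<forall>l'\<in>(?L0 \<union> Jset k N rep) - K. ?idx l \<le> ?idx l'"
      "\<forall>p<?m. ?S1 p \<noteq> None \<and> ent_l (the (?S1 p)) \<in> K \<longrightarrow> T p = ?S1 p"
      "\<forall>p<?m. ?S1 p = None \<longrightarrow> T p = None"
      "bij_betw g {p. p < ?m \<and> ?S1 p \<noteq> None \<and> ent_l (the (?S1 p)) \<notin> K} (K - ?L0)"
      "\<forall>p. p < ?m \<and> ?S1 p \<noteq> None \<and> ent_l (the (?S1 p)) \<notin> K \<longrightarrow>
                      T p = Some (new_entry k rep (g p))"
      "filt f a k T tau' xh'"
    by (rule nstep_nonomegaE[OF assms(1,2)])
  have Sp: "S p \<noteq> None" using assms(4,5) by simp
  then have S1p: "?S1 p \<noteq> None" by simp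
  have Tp: "T p \<noteq> None" using K(6) assms(5) unfolding filt_def by simp
  have "ent_d (the (T p)) \<le> ent_d (the (?S1 p))"
  proof (cases "?l \<in> K")
    case True
    then have "T p = ?S1 p" using K(2) S1p assms(5) by simp
    then show ?thesis by simp
  next
    case False
    then have p: "p \<in> {p. p < ?m \<and> ?S1 p \<noteq> None \<and> ent_l (the (?S1 p)) \<notin> K}"
      using S1p assms(5) by simp
    then have gp: "g p \<in> K - ?L0" using bij_betwE[OF K(4)] by blast
    have "?l \<in> ?L0" unfolding labels_iff using S1p assms(5) by blast
    then have "?idx (g p) \<le> ?idx ?l" using K(1) gp False by blast
    also have "?idx ?l = ent_d (the (?S1 p))"
      by (rule idx_of_stored[OF distinct_labels_refresh[OF assms(3)] assms(5) S1p])
    finally have "rep_t (rep (g p)) \<le> ent_d (the (?S1 p))"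
      using gp idx_of_not_stored[of "g p" ?m ?S1 rep] by simp
    moreover have "T p = Some (new_entry k rep (g p))" using K(5) p by simp
    ultimately show ?thesis by simp
  qed
  also have "\<dots> \<le> ent_d (the (S p))" by (rule ent_d_refresh_le[of S p, OF Sp])
  finally show ?thesis using Tp Sp by (auto simp: dvec_def)
qed

lemma alg2_run_nstep:
  assumes "alg2_run a c L f E A msg xs xh tau sl mid" "i \<notin> A" "c i = 0"
  shows "nstep f a k (Nin E i k) (\<lambda>l. msg k l i) (xh i k) (tau i k) (sl i k) (mid i k)
           (xh i (Suc k)) (tau i (Suc k)) (sl i (Suc k))"
  using assms unfolding alg2_run_def by blast

lemma alg2_run_distinct_labels:
  assumes "alg2_run a c L f E A msg xs xh tau sl mid" "i \<notin> A" "c i = 0"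
  shows "distinct_labels (2*f+1) (sl i k)"
proof (induction k)
  case 0
  have "sl i 0 = (\<lambda>p. None)" using assms unfolding alg2_run_def by blast
  then show ?case by (simp add: distinct_labels_def)
next
  case (Suc k)
  then show ?case using distinct_labels_nstep alg2_run_nstep[OF assms] by blast
qed

lemma alg2_run_index_eq_Max:
  assumes "alg2_run a c L f E A msg xs xh tau sl mid" "i \<notin> A" "c i = 0"
    and "tau i (Suc k) \<noteq> None"
  shows "\<forall>p<2*f+1. mid i k p \<noteq> None"
    and "tau i (Suc k) = Some (Max (dvec (mid i k) ` {..<2*f+1}) + 1)"
proof -
  have F: "filt f a k (mid i k) (tau i (Suc k)) (xh i (Suc k))"
    using nstep_filt[OF alg2_run_nstep[OF assms(1-3)] assms(4)] .
  then show full: "\<forall>p<2*f+1. mid i k p \<noteq> None" unfolding filt_def by blast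
  have "dvec (mid i k) ` {..<2*f+1} = (\<lambda>p. ent_d (the (mid i k p))) ` {..<2*f+1}"
    using full by (intro image_cong refl) (simp add: dvec_eq)
  then show "tau i (Suc k) = Some (Max (dvec (mid i k) ` {..<2*f+1}) + 1)"
    using F unfolding filt_def by simp
qed

lemma alg2_run_dvec_step:
  assumes "alg2_run a c L f E A msg xs xh tau sl mid" "i \<notin> A" "c i = 0"
    and "tau i (Suc k) \<noteq> None" "p < 2*f+1"
  shows "dvec (mid i (Suc k)) p \<le> dvec (mid i k) p + 1"
proof -
  have full: "\<forall>q<2*f+1. mid i k q \<noteq> None"
    by (rule alg2_run_index_eq_Max(1)[OF assms(1-4)])
  have sl: "sl i (Suc k) = incr (mid i k)"
    by (rule nstep_incr[OF alg2_run_nstep[OF assms(1-3)]])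
  with full have "\<forall>q<2*f+1. sl i (Suc k) q \<noteq> None" by simp
  then have "dvec (mid i (Suc k)) p \<le> dvec (sl i (Suc k)) p"
    using nstep_nonomega_dvec_le[OF alg2_run_nstep[OF assms(1-3)] assms(4)
        alg2_run_distinct_labels[OF assms(1-3)] _ assms(5)] by blast
  also have "\<dots> = dvec (mid i k) p + 1"
    unfolding sl using full assms(5) by (simp add: dvec_incr)
  finally show ?thesis .
qed

theorem lemma5:
  fixes a :: real and c L :: "'n::finite \<Rightarrow> real" and f :: nat
    and E :: "nat \<Rightarrow> ('n \<times> 'n) set" and A :: "'n set"
    and msg :: "nat \<Rightarrow> 'n \<Rightarrow> 'n \<Rightarrow> 'n msg" and xs :: "nat \<Rightarrow> real"
    and xh :: "'n \<Rightarrow> nat \<Rightarrow> real" and tau :: "'n \<Rightarrow> nat \<Rightarrow> nat option"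
    and sl mid :: "'n \<Rightarrow> nat \<Rightarrow> 'n slots" and i :: 'n and k :: nat
  assumes "card A \<le> f"
    and "alg2_run a c L f E A msg xs xh tau sl mid"
    and "i \<notin> A" and "c i = 0"
    and "1 \<le> k" and "tau i k \<noteq> None"
  shows "(\<forall>p < 2*f+1. dvec (mid i (Suc k)) p \<le> dvec (mid i k) p + 1) \<and>
         tau i (Suc k) \<noteq> None \<and> the (tau i (Suc k)) \<le> the (tau i k) + 1"
proof -
  note run = assms(2-4)
  obtain j where k: "k = Suc j" using assms(5) by (cases k) auto
  have tau_next: "tau i (Suc k) \<noteq> None"
    using nstep_keeps_index[OF alg2_run_nstep[OF run] assms(6)] .
  have dvec_le: "\<forall>p<2*f+1. dvec (mid i (Suc k)) p \<le> dvec (mid i k) p + 1"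
    using alg2_run_dvec_step[OF run tau_next] by blast
  have "Max (dvec (mid i k) ` {..<2*f+1}) \<le> Max (dvec (mid i j) ` {..<2*f+1}) + 1"
    using alg2_run_dvec_step[OF run, of j] assms(6) k
    by (intro Max_image_le_Max_image_add) auto
  then show ?thesis
    using dvec_le tau_next alg2_run_index_eq_Max(2)[OF run tau_next]
      alg2_run_index_eq_Max(2)[OF run, of j] assms(6) k by simp
qed

end
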